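(* Let $\{P_n\}_{n\ge0}$ and $\{Q_n\}_{n\ge0}$ be Brenke polynomial sets generated by $$A_1(t)B_1(xt)=\sum_{n\ge0}\frac{P_n(x)}{n!}t^n,\qquad A_2(t)B_2(xt)=\sum_{n\ge0}\frac{Q_n(x)}{n!}t^n,$$ with $A_i(t)=\sum_k a^{(i)}_kt^k$, $B_i(t)=\sum_kb^{(i)}_kt^k$, $a^{(i)}_0\neq0$ and $b^{(i)}_k\ne0$ for all $k$. Let $\theta$ be the transfer operator from $B_1$ to $B_2$, acting termwise on formal power series in $t$ by $\theta(t^n)=\frac{b^{(2)}_n}{b^{(1)}_n}t^n$. Define the connection coefficients $C_m(n)$ by $Q_n(x)=\sum_{m=0}^nC_m(n)P_m(x)$. Then for every $m\ge0$, $$A_2(t)\,\theta\!\left(\frac{t^m}{A_1(t)}\right)=\sum_{n\ge m}\frac{m!}{n!}C_m(n)\,t^n$$ as formal power series in $t$.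
   Context: A polynomial set (PS) is a sequence $\{P_n\}_{n\ge0}$ of complex polynomials with $\deg P_n=n$. A Brenke PS is a PS generated (as formal power series in $t$) by $A(t)B(xt)=\sum_{n\ge0}P_n(x)t^n/n!$ with $A(t)=\sum_ka_kt^k$, $B(t)=\sum_kb_kt^k$, $a_0\neq0$, $b_k\ne0$ for all $k$. *)

theory Defs
  imports "HOL-Computational_Algebra.Computational_Algebra"
begin

text \<open>The generating function A(t) B(x t), as a formal power series in t whose
coefficients are polynomials in x: coefficient of t^n is
sum_k a_(n-k) b_k x^k.\<close>
definition brenke_gf :: "complex fps \<Rightarrow> complex fps \<Rightarrow> complex poly fps" where
  "brenke_gf A B = Abs_fps (\<lambda>n. [:fps_nth A n:]) * Abs_fps (\<lambda>k. monom (fps_nth B k) k)"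

definition brenke_ps :: "complex fps \<Rightarrow> complex fps \<Rightarrow> (nat \<Rightarrow> complex poly) \<Rightarrow> bool" where
  "brenke_ps A B P \<longleftrightarrow> fps_nth A 0 \<noteq> 0 \<and> (\<forall>k. fps_nth B k \<noteq> 0) \<and>
     brenke_gf A B = Abs_fps (\<lambda>n. smult (inverse (fact n)) (P n))"

definition transfer_op :: "complex fps \<Rightarrow> complex fps \<Rightarrow> complex fps \<Rightarrow> complex fps" where
  "transfer_op B1 B2 f = Abs_fps (\<lambda>n. fps_nth B2 n / fps_nth B1 n * fps_nth f n)"

end

theory Submission
  imports Defs
begin

text \<open>Comparing coefficients of x^j in Q_n = sum_k C_k(n) P_k gives
  n! a2_(n-j) b2_j = b1_j sum_k k! C_k(n) a1_(k-j). Hence the n-th coefficient of A2 \<theta>(f)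
  is the pairing of f A1 with the sequence k! C_k(n) / n!, and for f = t^m / A1 only the
  term k = m survives.\<close>

lemma coeff_brenke_gf:
  "coeff (brenke_gf A B $ n) j = (if j \<le> n then A $ (n - j) * B $ j else 0)"
proof -
  have "coeff (brenke_gf A B $ n) j =
      (\<Sum>i=0..n. A $ i * (if n - i = j then B $ (n - i) else 0))"
    unfolding brenke_gf_def fps_mult_nth by (simp add: coeff_sum coeff_monom)
  also have "\<dots> = (if j \<le> n then A $ (n - j) * B $ j else 0)"
  proof (cases "j \<le> n")
    case True
    have "(\<Sum>i=0..n. A $ i * (if n - i = j then B $ (n - i) else 0)) =
        (\<Sum>i\<in>{0..n}. if i = n - j then A $ i * B $ j else 0)"
      using True by (intro sum.cong) auto
    then show ?thesis using True by (simp add: sum.delta)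
  qed (auto intro!: sum.neutral)
  finally show ?thesis .
qed

lemma brenke_ps_coeff:
  assumes "brenke_ps A B P"
  shows "coeff (P n) j = fact n * (if j \<le> n then A $ (n - j) * B $ j else 0)"
proof -
  have "brenke_gf A B $ n = smult (inverse (fact n)) (P n)"
    using assms unfolding brenke_ps_def by simp
  then have "inverse (fact n) * coeff (P n) j = (if j \<le> n then A $ (n - j) * B $ j else 0)"
    using coeff_brenke_gf[of A B n j] by simp
  then show ?thesis by (simp add: field_simps)
qed

lemma brenke_connection_coeff:
  assumes P: "brenke_ps A1 B1 P" and Q: "brenke_ps A2 B2 Q"
    and conn: "Q n = (\<Sum>k\<le>n. smult (C k n) (P k))"
    and "j \<le> n"
  shows "A2 $ (n - j) * (B2 $ j / B1 $ j) =
    inverse (fact n) * (\<Sum>k\<le>n. C k n * fact k * (if j \<le> k then A1 $ (k - j) else 0))"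
proof -
  have "B1 $ j \<noteq> 0"
    using P unfolding brenke_ps_def by auto
  have "coeff (Q n) j = (\<Sum>k\<le>n. C k n * coeff (P k) j)"
    using conn by (simp add: coeff_sum)
  then have "fact n * (A2 $ (n - j) * B2 $ j) =
      (\<Sum>k\<le>n. C k n * (fact k * (if j \<le> k then A1 $ (k - j) * B1 $ j else 0)))"
    using \<open>j \<le> n\<close> brenke_ps_coeff[OF Q, of n j] brenke_ps_coeff[OF P] by simp
  also have "\<dots> = (\<Sum>k\<le>n. C k n * fact k * (if j \<le> k then A1 $ (k - j) else 0)) * B1 $ j"
    by (simp add: sum_distrib_right) (rule sum.cong, auto)
  finally show ?thesis
    using \<open>B1 $ j \<noteq> 0\<close> by (simp add: field_simps)
qed

lemma fps_mult_transfer_op_nth: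
  "(A * transfer_op B1 B2 f) $ n = (\<Sum>j\<le>n. f $ j * (A $ (n - j) * (B2 $ j / B1 $ j)))"
  unfolding mult.commute[of A] fps_mult_nth transfer_op_def atLeast0AtMost
  by (simp add: ac_simps)

lemma sum_fps_nth_correlation:
  fixes f A :: "'a::comm_semiring_1 fps"
  shows "(\<Sum>j\<le>n. f $ j * (\<Sum>k\<le>n. d k * (if j \<le> k then A $ (k - j) else 0))) =
    (\<Sum>k\<le>n. d k * (f * A) $ k)"
proof -
  have "(\<Sum>j\<le>n. f $ j * (\<Sum>k\<le>n. d k * (if j \<le> k then A $ (k - j) else 0))) =
      (\<Sum>k\<le>n. d k * (\<Sum>j\<le>n. if j \<le> k then f $ j * A $ (k - j) else 0))"
    by (simp add: sum_distrib_left mult_ac if_distrib cong: if_cong)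
      (rule sum.swap)
  also have "\<dots> = (\<Sum>k\<le>n. d k * (f * A) $ k)"
  proof (intro sum.cong refl arg_cong[where f = "\<lambda>x. _ * x"])
    fix k assume "k \<in> {..n}"
    then have "(\<Sum>j\<le>n. if j \<le> k then f $ j * A $ (k - j) else 0) = (\<Sum>j\<le>k. f $ j * A $ (k - j))"
      by (simp add: sum.inter_filter[symmetric]) (rule sum.cong, auto)
    then show "(\<Sum>j\<le>n. if j \<le> k then f $ j * A $ (k - j) else 0) = (f * A) $ k"
      by (simp add: fps_mult_nth atLeast0AtMost)
  qed
  finally show ?thesis .
qed

theorem mainTheorem5:
  fixes A1 B1 A2 B2 :: "complex fps"
    and P Q :: "nat \<Rightarrow> complex poly"
    and C :: "nat \<Rightarrow> nat \<Rightarrow> complex"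
    and m :: nat
  assumes "brenke_ps A1 B1 P"
    and "brenke_ps A2 B2 Q"
    and "\<forall>n. Q n = (\<Sum>k\<le>n. smult (C k n) (P k))"
  shows "A2 * transfer_op B1 B2 (fps_X ^ m * inverse A1) =
         Abs_fps (\<lambda>n. if m \<le> n then fact m / fact n * C m n else 0)"
proof (rule fps_ext)
  fix n
  define g where "g = fps_X ^ m * inverse A1"
  have "A1 $ 0 \<noteq> 0"
    using assms(1) unfolding brenke_ps_def by simp
  then have "g * A1 = fps_X ^ m"
    unfolding g_def by (simp add: mult.assoc inverse_mult_eq_1)
  have "(A2 * transfer_op B1 B2 g) $ n = (\<Sum>j\<le>n. g $ j * (inverse (fact n) *
      (\<Sum>k\<le>n. C k n * fact k * (if j \<le> k then A1 $ (k - j) else 0))))"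
    unfolding fps_mult_transfer_op_nth
    using brenke_connection_coeff[where C = C, OF assms(1,2) spec[OF assms(3)]]
    by (intro sum.cong) auto
  also have "\<dots> = inverse (fact n) * (\<Sum>k\<le>n. C k n * fact k * (g * A1) $ k)"
    by (simp add: sum_distrib_left[symmetric] mult.left_commute[of _ "inverse _"]
        sum_fps_nth_correlation)
  also have "\<dots> = (if m \<le> n then fact m / fact n * C m n else 0)"
    using \<open>g * A1 = fps_X ^ m\<close>
    by (simp add: fps_X_power_nth if_distrib sum.delta field_simps cong: if_cong)
  finally show "(A2 * transfer_op B1 B2 (fps_X ^ m * inverse A1)) $ n =
      Abs_fps (\<lambda>n. if m \<le> n then fact m / fact n * C m n else 0) $ n"
    unfolding g_def by simp
qed

end
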